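(* Let $k,s$ be integers with $k\geq 3$ and $s\geq 3$. Then: (1) If $3\leq k\leq \binom{s-1}{\lceil (s-1)/2\rceil}+1$, then $\mathrm{GR}_{k}(\mathcal{C}_3:\mathcal{C}_s)=s$. (2) If $k>\binom{s-1}{\lceil (s-1)/2\rceil}+1$, then the pair $(\mathcal{C}_3,\mathcal{C}_s)$ is $(\mathcal{C}_3:\mathcal{C}_s)_k$-good.
   Context: $\mathcal{B}_N$ denotes the Boolean lattice of all subsets of $[N]=\{1,\dots,N\}$ ordered by inclusion. For posets $\mathcal{P},\mathcal{Q}$, an induced copy of $\mathcal{P}$ in $\mathcal{Q}$ is the image of an injection $f:\mathcal{P}\to\mathcal{Q}$ with $f(X)\le f(Y)$ iff $X\le Y$. $\mathcal{C}_t$ is the $t$-element chain. A coloring of $\mathcal{B}_N$ is an assignment of colors to its sets; a $k$-coloring is exact if it uses colors from $[k]$ and every color in $[k]$ is used at least once. A colored subfamily is monochromatic if all its sets have the same color and rainbow if all its sets have pairwise distinct colors. The pair $(\mathcal{Q},\mathcal{P})$ is $(\mathcal{Q}:\mathcal{P})_k$-good if for every positive integer $N$, every exact $k$-coloring of $\mathcal{B}_N$ contains a rainbow induced copy of $\mathcal{Q}$ or a monochromatic induced copy of $\mathcal{P}$. For a pair that is not $(\mathcal{Q}:\mathcal{P})_k$-good, the Boolean Gallai–Ramsey number $\mathrm{GR}_k(\mathcal{Q}:\mathcal{P})$ is the smallest integer $n$ such that for every $N\ge n$, every exact $k$-coloring of $\mathcal{B}_N$ contains a rainbow induced copy of $\mathcal{Q}$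 or a monochromatic induced copy of $\mathcal{P}$. *)

theory Defs
  imports Complex_Main
begin

definition boolean_lattice :: "nat \<Rightarrow> nat set set" where
  "boolean_lattice N = Pow {1..N}"

definition exact_coloring :: "nat \<Rightarrow> nat \<Rightarrow> (nat set \<Rightarrow> nat) \<Rightarrow> bool" where
  "exact_coloring k N c \<longleftrightarrow>
     (\<forall>X\<in>boolean_lattice N. c X \<in> {1..k}) \<and>
     (\<forall>i\<in>{1..k}. \<exists>X\<in>boolean_lattice N. c X = i)"

definition induced_chain_copy :: "nat \<Rightarrow> nat \<Rightarrow> nat set set \<Rightarrow> bool" where
  "induced_chain_copy t N F \<longleftrightarrow>
     (\<exists>f. inj_on f {0..<t} \<and> f ` {0..<t} \<subseteq> boolean_lattice N \<and>
          (\<forall>i\<in>{0..<t}. \<forall>j\<in>{0..<t}. (f i \<subseteq> f j \<longleftrightarrow> i \<le> j)) \<and>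
          F = f ` {0..<t})"

definition monochromatic :: "(nat set \<Rightarrow> nat) \<Rightarrow> nat set set \<Rightarrow> bool" where
  "monochromatic c F \<longleftrightarrow> (\<forall>X\<in>F. \<forall>Y\<in>F. c X = c Y)"

definition rainbow :: "(nat set \<Rightarrow> nat) \<Rightarrow> nat set set \<Rightarrow> bool" where
  "rainbow c F \<longleftrightarrow> (\<forall>X\<in>F. \<forall>Y\<in>F. X \<noteq> Y \<longrightarrow> c X \<noteq> c Y)"

definition GR_prop :: "nat \<Rightarrow> nat \<Rightarrow> nat \<Rightarrow> nat \<Rightarrow> bool" where
  "GR_prop k q p N \<longleftrightarrow>
     (\<forall>c. exact_coloring k N c \<longrightarrow>
        (\<exists>F. induced_chain_copy q N F \<and> rainbow c F) \<or>
        (\<exists>F. induced_chain_copy p N F \<and> monochromatic c F))"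

definition chain_good :: "nat \<Rightarrow> nat \<Rightarrow> nat \<Rightarrow> bool" where
  "chain_good k q p \<longleftrightarrow> (\<forall>N\<ge>1. GR_prop k q p N)"

text \<open>Boolean Gallai-Ramsey number GR_k(C_q : C_p) (meaningful for non-good pairs).\<close>
definition GR_chain :: "nat \<Rightarrow> nat \<Rightarrow> nat \<Rightarrow> nat" where
  "GR_chain k q p = (LEAST n. \<forall>N\<ge>n. N \<ge> 1 \<longrightarrow> GR_prop k q p N)"

end

theory Submission
  imports Defs "HOL-Combinatorics.Multiset_Permutations"
begin

(* Suppose an exact k-coloring of B_N (k >= 3) has no rainbow 3-chain, and let a be the color
   of the empty set. Then any two comparable sets whose colors differ from a have the same color.
   Hence representatives of the k - 1 colors other than a form an antichain, so
   k - 1 <= binom(N, N div 2) by Sperner's theorem (proved by the LYM count of permutations).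
   If N >= s, take sets X and Y of two different colors other than a, with X closest to Y (in
   symmetric difference) among the sets of its color: every set other than X on a maximal chain
   through X \<inter> Y, X and X \<union> Y then has color a, which yields a monochromatic chain
   of N >= s sets. Conversely, color a middle layer of B_(s-1) with the colors 2..k and all other
   sets with color 1: a chain meets the layer at most once, so there is no rainbow C_3, while a
   chain of s sets meets every layer, so it is not monochromatic. *)

lemma induced_chain_copy_3I:
  assumes "P \<subset> Q" "Q \<subset> R" "R \<subseteq> {1..N}"
  shows "induced_chain_copy 3 N {P, Q, R}"
proof -
  define f where "f i = (if i = 0 then P else if i = 1 then Q else R)" for i :: nat
  have three: "{0..<3::nat} = {0, 1, 2}" by auto
  show ?thesis
    unfolding induced_chain_copy_def boolean_lattice_def three
  proof (intro exI[of _ f] conjI)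
    show "inj_on f {0, 1, 2}" using assms by (auto simp: f_def inj_on_def)
    show "\<forall>i\<in>{0, 1, 2}. \<forall>j\<in>{0, 1, 2}. f i \<subseteq> f j \<longleftrightarrow> i \<le> j"
      using assms by (auto simp: f_def)
  qed (use assms in \<open>auto simp: f_def\<close>)
qed

lemma induced_chain_copyD:
  assumes "induced_chain_copy t N F"
  shows "F \<subseteq> Pow {1..N}" and "card F = t" and "inj_on card F"
proof -
  obtain f where inj: "inj_on f {0..<t}" and sub: "f ` {0..<t} \<subseteq> Pow {1..N}"
    and ord: "\<forall>i\<in>{0..<t}. \<forall>j\<in>{0..<t}. f i \<subseteq> f j \<longleftrightarrow> i \<le> j" and F: "F = f ` {0..<t}"
    using assms unfolding induced_chain_copy_def boolean_lattice_def by (elim exE conjE)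
  show Fsub: "F \<subseteq> Pow {1..N}" using sub F by simp
  show "card F = t" using card_image[OF inj] F by simp
  show "inj_on card F"
  proof (rule inj_onI)
    fix X Y assume "X \<in> F" "Y \<in> F" "card X = card Y"
    moreover have "X \<subseteq> Y \<or> Y \<subseteq> X" using \<open>X \<in> F\<close> \<open>Y \<in> F\<close> ord unfolding F by (metis imageE nle_le)
    moreover have "finite X" "finite Y"
      using \<open>X \<in> F\<close> \<open>Y \<in> F\<close> Fsub by (meson PowD finite_atLeastAtMost finite_subset subsetD)+
    ultimately show "X = Y" using card_subset_eq by metis
  qed
qed

lemma induced_chain_copy_full_ranks:
  assumes "induced_chain_copy (Suc N) N F"
  shows "card ` F = {0..N}"
proof (rule card_subset_eq)
  show "card ` F \<subseteq> {0..N}"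
  proof
    fix r assume "r \<in> card ` F"
    then obtain X where "X \<in> F" "r = card X" by blast
    moreover have "X \<subseteq> {1..N}" using \<open>X \<in> F\<close> induced_chain_copyD(1)[OF assms] by blast
    ultimately have "r \<le> card {1..N}" using card_mono[of "{1..N}" X] by simp
    then show "r \<in> {0..N}" by simp
  qed
  show "card (card ` F) = card {0..N}"
    using induced_chain_copyD[OF assms] by (simp add: card_image)
qed simp

lemma exists_color_avoiding:
  assumes "2 < (k::nat)"
  shows "\<exists>i\<in>{1..k}. i \<noteq> u \<and> i \<noteq> v"
proof (rule ccontr)
  assume "\<not> ?thesis"
  then have "card {1..k} \<le> card {u, v}" by (intro card_mono) auto
  also have "\<dots> \<le> 2" by (simp add: card_insert_if)
  finally show False using assms by simp
qed

lemma rainbow_free_comparable_same_color: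
  assumes no_rainbow: "\<nexists>F. induced_chain_copy 3 N F \<and> rainbow c F"
    and "P \<subseteq> Q \<or> Q \<subseteq> P" "P \<subseteq> {1..N}" "Q \<subseteq> {1..N}" "c P \<noteq> c {}" "c Q \<noteq> c {}"
  shows "c P = c Q"
proof -
  have "c P = c Q" if "P \<subset> Q" "Q \<subseteq> {1..N}" "c P \<noteq> c {}" "c Q \<noteq> c {}" for P Q
  proof (rule ccontr)
    assume "c P \<noteq> c Q"
    with that have "induced_chain_copy 3 N {{}, P, Q} \<and> rainbow c {{}, P, Q}"
      by (auto intro!: induced_chain_copy_3I simp: rainbow_def)
    with no_rainbow show False by blast
  qed
  with assms show ?thesis by (metis psubsetI)
qed

lemma set_take_subset_set_take_iff:
  assumes "distinct L" "i \<le> length L" "j \<le> length L"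
  shows "set (take i L) \<subseteq> set (take j L) \<longleftrightarrow> i \<le> j"
proof
  assume "set (take i L) \<subseteq> set (take j L)"
  then have "card (set (take i L)) \<le> card (set (take j L))" by (intro card_mono) auto
  with assms show "i \<le> j" by (simp add: distinct_card)
qed (rule set_take_subset_set_take)

lemma induced_chain_copy_prefixes:
  assumes L: "L \<in> permutations_of_set {1..N}"
    and g: "strict_mono_on {0..<t} g" "g ` {0..<t} \<subseteq> {0..N}"
  shows "induced_chain_copy t N ((\<lambda>i. set (take (g i) L)) ` {0..<t})"
proof -
  have L': "distinct L" "set L = {1..N}" "length L = N"
    using L length_finite_permutations_of_set[OF L] by (auto simp: permutations_of_set_def)
  have order: "set (take (g i) L) \<subseteq> set (take (g j) L) \<longleftrightarrow> i \<le> j"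
    if "i \<in> {0..<t}" "j \<in> {0..<t}" for i j
  proof -
    have "g i \<le> length L" "g j \<le> length L" using g(2) that L'(3) by (auto simp: image_subset_iff)
    then show ?thesis
      using set_take_subset_set_take_iff[OF L'(1)] strict_mono_on_less_eq[OF g(1) that] by simp
  qed
  show ?thesis
    unfolding induced_chain_copy_def boolean_lattice_def
  proof (intro exI[of _ "\<lambda>i. set (take (g i) L)"] conjI)
    show "inj_on (\<lambda>i. set (take (g i) L)) {0..<t}"
      using order by (intro inj_onI) (metis order_antisym order_refl)
    show "(\<lambda>i. set (take (g i) L)) ` {0..<t} \<subseteq> Pow {1..N}"
      using set_take_subset L'(2) by fastforce
  qed (use order in auto)
qed

lemma monochromatic_chain_skipping_prefix:
  assumes L: "L \<in> permutations_of_set {1..N}" and "s \<le> N"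
    and colored: "\<And>n. n \<le> N \<Longrightarrow> n \<noteq> n\<^sub>0 \<Longrightarrow> c (set (take n L)) = a"
  shows "\<exists>F. induced_chain_copy s N F \<and> monochromatic c F"
proof -
  define g where "g n = (if n < n\<^sub>0 then n else Suc n)" for n
  have g: "strict_mono_on {0..<s} g" "g ` {0..<s} \<subseteq> {0..N}"
    using \<open>s \<le> N\<close> by (auto simp: g_def strict_mono_on_def)
  have "induced_chain_copy s N ((\<lambda>n. set (take (g n) L)) ` {0..<s})"
    by (rule induced_chain_copy_prefixes[OF L g])
  moreover have "c (set (take (g n) L)) = a" if "n < s" for n
  proof (rule colored)
    show "g n \<le> N" using g(2) that by (auto simp: image_subset_iff)
    show "g n \<noteq> n\<^sub>0" by (simp add: g_def)
  qed
  then have "monochromatic c ((\<lambda>n. set (take (g n) L)) ` {0..<s})"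
    by (auto simp: monochromatic_def)
  ultimately show ?thesis by blast
qed

lemma permutation_through_nested_sets:
  assumes "finite S" "A \<subseteq> B" "B \<subseteq> C" "C \<subseteq> S"
  obtains L where "L \<in> permutations_of_set S" "set (take (card A) L) = A"
    "set (take (card B) L) = B" "set (take (card C) L) = C"
proof -
  have fin: "finite A" "finite B" "finite C" using assms finite_subset by metis+
  obtain la lb lc ld where lists: "distinct la" "set la = A" "distinct lb" "set lb = B - A"
    "distinct lc" "set lc = C - B" "distinct ld" "set ld = S - C"
    using fin \<open>finite S\<close> by (meson finite_Diff finite_distinct_list)
  define L where "L = la @ lb @ lc @ ld"
  have cards: "card B = card A + card (B - A)" "card C = card B + card (C - B)"
    using fin assms by (simp_all add: card_Diff_subset card_mono)
  have lengths: "length la = card A" "length lb = card (B - A)" "length lc = card (C - B)"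
    using lists by (metis distinct_card)+
  show thesis
  proof (rule that)
    show "L \<in> permutations_of_set S"
      using assms lists by (auto simp: L_def permutations_of_set_def)
    show "set (take (card A) L) = A"
      using lists lengths by (simp add: L_def)
    show "set (take (card B) L) = B"
      using lists lengths assms by (auto simp: L_def cards)
    show "set (take (card C) L) = C"
      using lists lengths assms by (auto simp: L_def cards)
  qed
qed

lemma closest_set_chain_color:
  fixes N :: nat
  assumes comparable: "\<And>P Q. P \<subseteq> Q \<or> Q \<subseteq> P \<Longrightarrow> P \<subseteq> {1..N} \<Longrightarrow> Q \<subseteq> {1..N}
      \<Longrightarrow> c P \<noteq> a \<Longrightarrow> c Q \<noteq> a \<Longrightarrow> c P = c Q"
    and X: "X \<subseteq> {1..N}" "c X \<noteq> a" and Y: "Y \<subseteq> {1..N}" "c Y \<noteq> a" "c X \<noteq> c Y"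
    and closest: "\<And>Z. Z \<subseteq> {1..N} \<Longrightarrow> c Z = c X \<Longrightarrow> card (sym_diff X Y) \<le> card (sym_diff Z Y)"
    and Z: "Z \<subseteq> {1..N}" "Z \<noteq> X" "Z \<subseteq> X \<or> X \<subseteq> Z"
      "Z \<subseteq> X \<inter> Y \<or> X \<inter> Y \<subseteq> Z" "Z \<subseteq> X \<union> Y \<or> X \<union> Y \<subseteq> Z"
  shows "c Z = a"
proof (rule ccontr)
  assume "c Z \<noteq> a"
  then have "c Z = c X" using comparable[of Z X] Z(1,3) X by blast
  then have "\<not> (Z \<subseteq> Y \<or> Y \<subseteq> Z)" using comparable[of Z Y] Y Z(1) \<open>c Z \<noteq> a\<close> by auto
  then have between: "X \<inter> Y \<subseteq> Z" "Z \<subseteq> X \<union> Y" using Z(4,5) by blast+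
  have "sym_diff Z Y = sym_diff X Y - sym_diff X Z" using between by blast
  moreover have "sym_diff X Z \<noteq> {}" using Z(2) by auto
  moreover have "sym_diff X Z \<subseteq> sym_diff X Y" using between by blast
  ultimately have "sym_diff Z Y \<subset> sym_diff X Y" by blast
  moreover have "finite (sym_diff X Y)"
    using finite_subset[OF X(1) finite_atLeastAtMost] finite_subset[OF Y(1) finite_atLeastAtMost] by simp
  ultimately have "card (sym_diff Z Y) < card (sym_diff X Y)" by (rule psubset_card_mono[rotated])
  with closest[OF Z(1) \<open>c Z = c X\<close>] show False by simp
qed

lemma rainbow_free_imp_monochromatic_chain:
  assumes c: "exact_coloring k N c" and "3 \<le> k"
    and no_rainbow: "\<nexists>F. induced_chain_copy 3 N F \<and> rainbow c F" and "s \<le> N"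
  shows "\<exists>F. induced_chain_copy s N F \<and> monochromatic c F"
proof -
  define a where "a = c {}"
  have comparable: "\<And>P Q. P \<subseteq> Q \<or> Q \<subseteq> P \<Longrightarrow> P \<subseteq> {1..N} \<Longrightarrow> Q \<subseteq> {1..N}
      \<Longrightarrow> c P \<noteq> a \<Longrightarrow> c Q \<noteq> a \<Longrightarrow> c P = c Q"
    using rainbow_free_comparable_same_color[OF no_rainbow] unfolding a_def by blast
  have "2 < k" using \<open>3 \<le> k\<close> by simp
  obtain i where i: "i \<in> {1..k}" "i \<noteq> a" using exists_color_avoiding[OF \<open>2 < k\<close>] by blast
  obtain j where j: "j \<in> {1..k}" "j \<noteq> a" "j \<noteq> i" using exists_color_avoiding[OF \<open>2 < k\<close>] by blast
  have onto: "\<exists>X \<subseteq> {1..N}. c X = l" if "l \<in> {1..k}" for l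
    using c that unfolding exact_coloring_def boolean_lattice_def by blast
  obtain Y where Y: "Y \<subseteq> {1..N}" "c Y = j" using onto[OF j(1)] by blast
  obtain X0 where "X0 \<subseteq> {1..N} \<and> c X0 = i" using onto[OF i(1)] by blast
  from ex_has_least_nat[of "\<lambda>X. X \<subseteq> {1..N} \<and> c X = i", OF this, of "\<lambda>X. card (sym_diff X Y)"]
  obtain X where X: "X \<subseteq> {1..N}" "c X = i"
    and closest: "\<And>Z. Z \<subseteq> {1..N} \<Longrightarrow> c Z = i \<Longrightarrow> card (sym_diff X Y) \<le> card (sym_diff Z Y)"
    by auto
  obtain L where L: "L \<in> permutations_of_set {1..N}" "set (take (card (X \<inter> Y)) L) = X \<inter> Y"
    "set (take (card X) L) = X" "set (take (card (X \<union> Y)) L) = X \<union> Y"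
    using permutation_through_nested_sets[of "{1..N}" "X \<inter> Y" X "X \<union> Y"] X Y by auto
  have L': "distinct L" "set L = {1..N}" "length L = N"
    using L(1) length_finite_permutations_of_set[OF L(1)] by (auto simp: permutations_of_set_def)
  have prefix_color: "c (set (take n L)) = a" if "n \<le> N" "n \<noteq> card X" for n
  proof (rule closest_set_chain_color[OF comparable X(1) _ Y(1) _ _ closest])
    have comparable_prefixes: "set (take n L) \<subseteq> set (take m L) \<or> set (take m L) \<subseteq> set (take n L)"
      for m by (meson nle_le set_take_subset_set_take)
    show "set (take n L) \<subseteq> X \<or> X \<subseteq> set (take n L)"
      using comparable_prefixes[of "card X"] L(3) by simp
    show "set (take n L) \<subseteq> X \<inter> Y \<or> X \<inter> Y \<subseteq> set (take n L)"
      using comparable_prefixes[of "card (X \<inter> Y)"] L(2) by simp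
    show "set (take n L) \<subseteq> X \<union> Y \<or> X \<union> Y \<subseteq> set (take n L)"
      using comparable_prefixes[of "card (X \<union> Y)"] L(4) by simp
    show "set (take n L) \<subseteq> {1..N}" using L'(2) set_take_subset by metis
    have "card (set (take n L)) = n" using L' that(1) by (simp add: distinct_card)
    then show "set (take n L) \<noteq> X" using that(2) by auto
  qed (use X Y i j in auto)
  show ?thesis
    by (rule monochromatic_chain_skipping_prefix[where c = c and n\<^sub>0 = "card X",
          OF L(1) \<open>s \<le> N\<close> prefix_color])
qed

lemma GR_prop_if_ge:
  assumes "3 \<le> k" "s \<le> N"
  shows "GR_prop k 3 s N"
  unfolding GR_prop_def
proof (intro allI impI)
  fix c assume c: "exact_coloring k N c"
  show "(\<exists>F. induced_chain_copy 3 N F \<and> rainbow c F) \<or> (\<exists>F. induced_chain_copy s N F \<and> monochromatic c F)"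
  proof (cases "\<exists>F. induced_chain_copy 3 N F \<and> rainbow c F")
    case False
    then show ?thesis using rainbow_free_imp_monochromatic_chain[OF c assms(1) _ assms(2)] by simp
  qed simp
qed

lemma card_permutations_with_prefix:
  assumes "finite S" "Y \<subseteq> S"
  shows "card {xs \<in> permutations_of_set S. set (take (card Y) xs) = Y}
    = fact (card Y) * fact (card S - card Y)"
proof -
  define D where "D = permutations_of_set Y \<times> permutations_of_set (S - Y)"
  have fin: "finite Y" "finite (S - Y)" using assms finite_subset by auto
  have "bij_betw (\<lambda>(ys, zs). ys @ zs) D {xs \<in> permutations_of_set S. set (take (card Y) xs) = Y}"
  proof (rule bij_betw_byWitness[where f' = "\<lambda>xs. (take (card Y) xs, drop (card Y) xs)"])
    show "\<forall>p\<in>D. (take (card Y) (case p of (ys, zs) \<Rightarrow> ys @ zs),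
        drop (card Y) (case p of (ys, zs) \<Rightarrow> ys @ zs)) = p"
      by (auto simp: D_def length_finite_permutations_of_set)
    show "(\<lambda>(ys, zs). ys @ zs) ` D \<subseteq> {xs \<in> permutations_of_set S. set (take (card Y) xs) = Y}"
      using assms by (auto simp: D_def permutations_of_set_def length_finite_permutations_of_set)
    show "(\<lambda>xs. (take (card Y) xs, drop (card Y) xs))
        ` {xs \<in> permutations_of_set S. set (take (card Y) xs) = Y} \<subseteq> D"
    proof clarify
      fix xs assume xs: "xs \<in> permutations_of_set S" "set (take (card Y) xs) = Y"
      then have "distinct xs" "set xs = S" by (auto simp: permutations_of_set_def)
      moreover have "set xs = Y \<union> set (drop (card Y) xs)"
        using xs(2) by (metis append_take_drop_id set_append)
      moreover have "Y \<inter> set (drop (card Y) xs) = {}"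
        using \<open>distinct xs\<close> xs(2) set_take_disj_set_drop_if_distinct by blast
      ultimately have "set (drop (card Y) xs) = S - Y" by blast
      with xs \<open>distinct xs\<close> show "(take (card Y) xs, drop (card Y) xs) \<in> D"
        by (auto simp: D_def permutations_of_set_def)
    qed
  qed auto
  then show ?thesis
    using assms fin by (simp add: bij_betw_same_card[symmetric] D_def card_cartesian_product
        card_Diff_subset card_mono)
qed

theorem sperner:
  assumes "finite S" "A \<subseteq> Pow S"
    and antichain: "\<And>P Q. P \<in> A \<Longrightarrow> Q \<in> A \<Longrightarrow> P \<subseteq> Q \<Longrightarrow> P = Q"
  shows "card A \<le> card S choose (card S div 2)"
proof -
  define n where "n = card S"
  define B where "B = n choose (n div 2)"
  define perms where "perms Y = {xs \<in> permutations_of_set S. set (take (card Y) xs) = Y}" for Y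
  have "finite A" using finite_subset[OF assms(2)] assms(1) by simp
  have disjoint: "perms Y \<inter> perms Z = {}" if "Y \<in> A" "Z \<in> A" "Y \<noteq> Z" for Y Z
  proof (rule ccontr)
    assume "perms Y \<inter> perms Z \<noteq> {}"
    then obtain xs where "set (take (card Y) xs) = Y" "set (take (card Z) xs) = Z"
      unfolding perms_def by blast
    then have "Y \<subseteq> Z \<or> Z \<subseteq> Y" by (metis nle_le set_take_subset_set_take)
    then show False using antichain that by blast
  qed
  have "(\<Sum>Y\<in>A. card (perms Y)) = card (\<Union>Y\<in>A. perms Y)"
    using \<open>finite A\<close> disjoint by (intro card_UN_disjoint[symmetric]) (auto simp: perms_def)
  also have "\<dots> \<le> card (permutations_of_set S)"
    by (intro card_mono) (auto simp: perms_def)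
  finally have total: "(\<Sum>Y\<in>A. card (perms Y)) \<le> fact n"
    using \<open>finite S\<close> by (simp add: n_def)
  have each: "fact n \<le> card (perms Y) * B" if "Y \<in> A" for Y
  proof -
    have "Y \<subseteq> S" using that assms(2) by blast
    then have "card Y \<le> n" using \<open>finite S\<close> by (simp add: n_def card_mono)
    then have "fact n = fact (card Y) * fact (n - card Y) * (n choose card Y)"
      by (simp add: binomial_fact_lemma)
    also have "\<dots> = card (perms Y) * (n choose card Y)"
      using card_permutations_with_prefix[OF \<open>finite S\<close> \<open>Y \<subseteq> S\<close>] by (simp add: perms_def n_def)
    also have "\<dots> \<le> card (perms Y) * B"
      by (simp add: B_def binomial_maximum)
    finally show ?thesis .
  qed
  have "card A * fact n \<le> (\<Sum>Y\<in>A. card (perms Y) * B)"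
    using sum_mono[OF each] by simp
  also have "\<dots> \<le> fact n * B"
    using total by (simp add: sum_distrib_right[symmetric])
  finally show ?thesis by (simp add: B_def n_def)
qed

lemma rainbow_chain_if_many_colors:
  assumes c: "exact_coloring k N c" and k: "(N choose (N div 2)) + 1 < k"
  shows "\<exists>F. induced_chain_copy 3 N F \<and> rainbow c F"
proof (rule ccontr)
  assume no_rainbow: "\<nexists>F. induced_chain_copy 3 N F \<and> rainbow c F"
  define C where "C = {1..k} - {c {}}"
  have "\<forall>i\<in>{1..k}. \<exists>X. X \<subseteq> {1..N} \<and> c X = i"
    using c unfolding exact_coloring_def boolean_lattice_def by (meson PowD)
  from bchoice[OF this] obtain rep where rep: "\<forall>i\<in>{1..k}. rep i \<subseteq> {1..N} \<and> c (rep i) = i"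
    by blast
  have "inj_on rep C"
  proof (rule inj_onI)
    fix i j assume "i \<in> C" "j \<in> C" "rep i = rep j"
    then show "i = j" using rep unfolding C_def by (metis DiffD1)
  qed
  then have "k - 1 \<le> card (rep ` C)"
    by (simp add: card_image C_def card_Diff_singleton_if)
  moreover have "card (rep ` C) \<le> card {1..N} choose (card {1..N} div 2)"
  proof (rule sperner)
    show "rep ` C \<subseteq> Pow {1..N}" using rep by (auto simp: C_def)
    fix P Q assume "P \<in> rep ` C" "Q \<in> rep ` C" "P \<subseteq> Q"
    then obtain i j where ij: "i \<in> C" "j \<in> C" "P = rep i" "Q = rep j" by blast
    then have "c P = c Q"
      using rainbow_free_comparable_same_color[OF no_rainbow, of P Q] rep \<open>P \<subseteq> Q\<close>
      by (auto simp: C_def)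
    then show "P = Q" using ij rep by (auto simp: C_def)
  qed simp
  ultimately show False using k by simp
qed

lemma no_rainbow_3_chain_if_constant_off_layer:
  assumes "\<And>X. card X \<noteq> m \<Longrightarrow> c X = a"
  shows "\<nexists>F. induced_chain_copy 3 N F \<and> rainbow c F"
proof
  assume "\<exists>F. induced_chain_copy 3 N F \<and> rainbow c F"
  then obtain F where F: "induced_chain_copy 3 N F" "rainbow c F" by blast
  obtain P Q R where PQR: "F = {P, Q, R}" "P \<noteq> Q" "P \<noteq> R" "Q \<noteq> R"
    using induced_chain_copyD(2)[OF F(1)] card_3_iff by metis
  have cards: "card P \<noteq> card Q" "card P \<noteq> card R" "card Q \<noteq> card R"
    using induced_chain_copyD(3)[OF F(1)] PQR by (auto dest: inj_onD)
  have "c P \<noteq> c Q" "c P \<noteq> c R" "c Q \<noteq> c R"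
    using F(2) PQR unfolding rainbow_def by auto
  then show False
    using assms[of P] assms[of Q] assms[of R] cards by (cases "card P = m"; cases "card Q = m") auto
qed

lemma no_monochromatic_full_chain_if_layer_recolored:
  assumes "0 < m" "m \<le> N" "\<And>X. card X \<noteq> m \<Longrightarrow> c X = a"
    "\<And>X. X \<subseteq> {1..N} \<Longrightarrow> card X = m \<Longrightarrow> c X \<noteq> a"
  shows "\<nexists>F. induced_chain_copy (Suc N) N F \<and> monochromatic c F"
proof
  assume "\<exists>F. induced_chain_copy (Suc N) N F \<and> monochromatic c F"
  then obtain F where F: "induced_chain_copy (Suc N) N F" "monochromatic c F" by blast
  have "0 \<in> card ` F" "m \<in> card ` F"
    using induced_chain_copy_full_ranks[OF F(1)] \<open>m \<le> N\<close> by auto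
  then obtain X Y where "X \<in> F" "card X = 0" "Y \<in> F" "card Y = m" by auto
  moreover have "Y \<subseteq> {1..N}" using \<open>Y \<in> F\<close> induced_chain_copyD(1)[OF F(1)] by blast
  ultimately have "c X \<noteq> c Y" using assms by auto
  with F(2) \<open>X \<in> F\<close> \<open>Y \<in> F\<close> show False unfolding monochromatic_def by blast
qed

lemma exact_coloring_by_layer:
  assumes "2 \<le> k" "0 < m" "k \<le> (N choose m) + 1"
  obtains c where "exact_coloring k N c" "\<And>X. card X \<noteq> m \<Longrightarrow> c X = 1"
    "\<And>X. X \<subseteq> {1..N} \<Longrightarrow> card X = m \<Longrightarrow> c X \<noteq> 1"
proof -
  define layer where "layer = {X. X \<subseteq> {1..N} \<and> card X = m}"
  have "finite layer" by (simp add: layer_def)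
  moreover have "card {2..k} \<le> card layer" using assms(3) by (simp add: layer_def n_subsets)
  ultimately obtain f where "inj_on f {2..k}" "f ` {2..k} \<subseteq> layer"
    using card_le_inj[of "{2..k}" layer] by auto
  moreover have "{2..k} \<noteq> {}" using assms(1) by simp
  ultimately obtain g where g: "g ` layer = {2..k}"
    using inj_on_iff_surj[of "{2..k}" layer] by blast
  define c where "c X = (if card X = m then g X else 1)" for X
  have layer_colors: "c X \<in> {2..k}" if "X \<subseteq> {1..N}" "card X = m" for X
    using g that by (auto simp: c_def layer_def)
  show thesis
  proof (rule that)
    show "exact_coloring k N c"
      unfolding exact_coloring_def boolean_lattice_def
    proof (intro conjI ballI)
      fix X assume "X \<in> Pow {1..N}"
      then show "c X \<in> {1..k}"
        using layer_colors[of X] assms(1) by (cases "card X = m") (auto simp: c_def)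
    next
      fix i assume i: "i \<in> {1..k}"
      show "\<exists>X\<in>Pow {1..N}. c X = i"
      proof (cases "i = 1")
        case True
        then show ?thesis using assms(2) by (intro bexI[of _ "{}"]) (auto simp: c_def)
      next
        case False
        then have "i \<in> g ` layer" using g i by auto
        then show ?thesis by (auto simp: c_def layer_def)
      qed
    qed
    show "c X = 1" if "card X \<noteq> m" for X
      using that by (simp add: c_def)
    show "c X \<noteq> 1" if "X \<subseteq> {1..N}" "card X = m" for X
      using layer_colors[OF that] by auto
  qed
qed

lemma not_GR_prop_if_few_colors:
  assumes "2 \<le> k" "0 < m" "k \<le> (N choose m) + 1"
  shows "\<not> GR_prop k 3 (Suc N) N"
proof -
  have "m \<le> N"
  proof (rule ccontr)
    assume "\<not> m \<le> N"
    then have "N choose m = 0" by simp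
    with assms show False by simp
  qed
  obtain c where c: "exact_coloring k N c" "\<And>X. card X \<noteq> m \<Longrightarrow> c X = 1"
    "\<And>X. X \<subseteq> {1..N} \<Longrightarrow> card X = m \<Longrightarrow> c X \<noteq> 1"
    using exact_coloring_by_layer[OF assms] by blast
  have "\<nexists>F. induced_chain_copy 3 N F \<and> rainbow c F"
    by (rule no_rainbow_3_chain_if_constant_off_layer) (rule c(2))
  moreover have "\<nexists>F. induced_chain_copy (Suc N) N F \<and> monochromatic c F"
    by (rule no_monochromatic_full_chain_if_layer_recolored[OF \<open>0 < m\<close> \<open>m \<le> N\<close> c(2,3)])
  ultimately show ?thesis using c(1) unfolding GR_prop_def by blast
qed

lemma binomial_ceiling_half: "n choose nat \<lceil>real n / 2\<rceil> = n choose (n div 2)"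
proof (cases "even n")
  case True
  then have "real n / 2 = real (n div 2)" by (simp add: real_of_nat_div)
  then show ?thesis by simp
next
  case False
  then obtain q where n: "n = 2 * q + 1" by (rule oddE)
  have "\<lceil>real n / 2\<rceil> = int q + 1"
  proof (rule ceiling_unique)
    show "real n / 2 \<le> real_of_int (int q + 1)" "real_of_int (int q + 1) - 1 < real n / 2"
      using n by simp_all
  qed
  then have "nat \<lceil>real n / 2\<rceil> = n - n div 2" using n by simp
  then show ?thesis using binomial_symmetric[of "n div 2" n] by simp
qed

lemma central_binomial_mono:
  assumes "N \<le> n"
  shows "N choose (N div 2) \<le> n choose (n div 2)"
  using binomial_right_mono[OF assms] binomial_maximum order_trans by blast

lemma GR_chain_eq_threshold:
  assumes "2 \<le> n" and above: "\<And>N. n \<le> N \<Longrightarrow> GR_prop k q p N"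
    and below: "\<not> GR_prop k q p (n - 1)"
  shows "\<not> chain_good k q p \<and> GR_chain k q p = n"
proof
  show "\<not> chain_good k q p"
  proof
    assume "chain_good k q p"
    moreover have "1 \<le> n - 1" using \<open>2 \<le> n\<close> by simp
    ultimately show False using below unfolding chain_good_def by blast
  qed
  show "GR_chain k q p = n"
    unfolding GR_chain_def
  proof (rule Least_equality)
    fix m assume threshold: "\<forall>N\<ge>m. 1 \<le> N \<longrightarrow> GR_prop k q p N"
    show "n \<le> m"
    proof (rule ccontr)
      assume "\<not> n \<le> m"
      then have "m \<le> n - 1" "1 \<le> n - 1" using \<open>2 \<le> n\<close> by simp_all
      then show False using threshold below by blast
    qed
  qed (use above in auto)
qed

lemma chain_good_if_many_colors:
  assumes "3 \<le> k" and many: "((s - 1) choose ((s - 1) div 2)) + 1 < k"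
  shows "chain_good k 3 s"
  unfolding chain_good_def
proof (intro allI impI)
  fix N :: nat
  show "GR_prop k 3 s N"
  proof (cases "s \<le> N")
    case False
    then have "N \<le> s - 1" by simp
    then have "(N choose (N div 2)) + 1 < k"
      using central_binomial_mono[of N "s - 1"] many by simp
    then show ?thesis
      unfolding GR_prop_def by (blast intro: rainbow_chain_if_many_colors)
  qed (rule GR_prop_if_ge[OF assms(1)])
qed

theorem theorem1p2:
  fixes k s :: nat
  assumes "k \<ge> 3" and "s \<ge> 3"
  shows "(k \<le> ((s - 1) choose (nat \<lceil>real (s - 1) / 2\<rceil>)) + 1 \<longrightarrow>
            \<not> chain_good k 3 s \<and> GR_chain k 3 s = s)
       \<and> (k > ((s - 1) choose (nat \<lceil>real (s - 1) / 2\<rceil>)) + 1 \<longrightarrow>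
            chain_good k 3 s)"
  unfolding binomial_ceiling_half
proof (rule conjI; rule impI)
  assume few: "k \<le> ((s - 1) choose ((s - 1) div 2)) + 1"
  have "2 \<le> k" "0 < (s - 1) div 2" using assms by (simp_all add: div_greater_zero_iff)
  then have "\<not> GR_prop k 3 (Suc (s - 1)) (s - 1)"
    using not_GR_prop_if_few_colors few by blast
  then show "\<not> chain_good k 3 s \<and> GR_chain k 3 s = s"
    using GR_chain_eq_threshold[of s k 3 s] GR_prop_if_ge[OF assms(1)] assms(2) by simp
next
  assume "((s - 1) choose ((s - 1) div 2)) + 1 < k"
  then show "chain_good k 3 s" by (rule chain_good_if_many_colors[OF assms(1)])
qed

end
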